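(* Let $\mathcal B$ be a chordal building set on a finite set $S\subset\mathbb N$ of even cardinality $2k$ with no connected component of odd cardinality. Then the map sending an alternating $\mathcal B$-permutation $(x_1x_2\cdots x_{2k})$ to the chain $(\emptyset,\{x_1,x_2\},\{x_1,\dots,x_4\},\dots,\{x_1,\dots,x_{2k}\})$ is a bijection from the set of alternating $\mathcal B$-permutations onto the set of maximal chains of $\widehat{\mathcal P}_{\mathcal B}$ that have no decreasing position (with respect to $\mu_{\mathcal B}$).
   Context: A building set on a finite set $S\subset\mathbb N$ is a collection $\mathcal B$ of nonempty subsets of $S$ containing every singleton $\{i\}$, $i\in S$, such that $I,J\in\mathcal B$ and $I\cap J\neq\emptyset$ imply $I\cup J\in\mathcal B$. Its connected components are the inclusion-maximal elements of $\mathcal B$. For $I\subseteq S$, $\mathcal B|_I=\{J\in\mathcal B:J\subseteq I\}$. $\mathcal B$ is chordal if for every $I=\{i_1<\dots<i_r\}\in\mathcal B$ and every $1<s<r$, $\{i_s,\dots,i_r\}\in\mathcal B$. For a building set $\mathcal B$ on $S$ with $|S|=m$, a $\mathcal B$-permutation is a sequence $(x_1x_2\cdots x_m)$ listing each element of $S$ exactly once such that for each $1\le i\le m$, $x_i$ and $\max\{x_1,\dots,x_i\}$ lie in the same connected component of $\mathcal B|_{\{x_1,\dots,x_i\}}$. It is alternating if $x_1>x_2<x_3>x_4<\cdots$. $\widehat{\mathcal P}_{\mathcal B}=\{I\subseteq S:\ \mathcal B|_I\text{ has no connected component of odd cardinality}\}$, ordered by inclusion; its maximal chains have the form $\emptyset=I_0\subset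 I_1\subset\dots\subset I_k=S$ with $|I_i|=2i$. For a covering pair $I_1\subset I_2$ ($|I_2|=|I_1|+2$), $I_2\setminus I_1$ lies in a single connected component of $\mathcal B|_{I_2}$, denoted $\mathfrak C(I_2;I_1)$. On $\Omega=\mathbb Z\times\mathbb Z$ define $(a_1,a_2)\ge(b_1,b_2)$ iff either $a_1\ge a_2\ge b_1\ge b_2$ or $a_1=b_1\ge a_2\ge b_2$. On $\mathbb Z\times\Omega$ define $(x,\alpha)\succeq(y,\beta)$ iff $x>y$, or $x=y$ and $\alpha\ge\beta$; $\succ$ means $\succeq$ and $\neq$. Set $\mu_{\mathcal B}(I_1,I_2)=\bigl(\max\mathfrak C(I_2;I_1),(\max(I_2\setminus I_1),\min(I_2\setminus I_1))\bigr)$ for covering pairs. A maximal chain $(I_0,\dots,I_k)$ has a decreasing position at $1\le i<k$ if $\mu_{\mathcal B}(I_{i-1},I_i)\succ\mu_{\mathcal B}(I_i,I_{i+1})$. *)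

theory Defs
  imports Main
begin

definition building_set :: "nat set \<Rightarrow> nat set set \<Rightarrow> bool" where
  "building_set S B \<longleftrightarrow>
     (\<forall>I\<in>B. I \<noteq> {} \<and> I \<subseteq> S) \<and> (\<forall>i\<in>S. {i} \<in> B) \<and>
     (\<forall>I\<in>B. \<forall>J\<in>B. I \<inter> J \<noteq> {} \<longrightarrow> I \<union> J \<in> B)"

definition components :: "nat set set \<Rightarrow> nat set set" where
  "components B = {I \<in> B. \<forall>J\<in>B. I \<subseteq> J \<longrightarrow> J = I}"

definition restr :: "nat set set \<Rightarrow> nat set \<Rightarrow> nat set set" where
  "restr B I = {J \<in> B. J \<subseteq> I}"

(* for I = {i_1 < ... < i_r} in B and 1 < s < r, {i_s,...,i_r} in B (positions 1-indexed) *)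
definition chordal :: "nat set set \<Rightarrow> bool" where
  "chordal B \<longleftrightarrow> (\<forall>I\<in>B. \<forall>s. 1 < s \<and> s < card I \<longrightarrow>
       set (drop (s - 1) (sorted_list_of_set I)) \<in> B)"

definition same_component :: "nat set set \<Rightarrow> nat \<Rightarrow> nat \<Rightarrow> bool" where
  "same_component B x y \<longleftrightarrow> (\<exists>C\<in>components B. x \<in> C \<and> y \<in> C)"

definition B_perm :: "nat set \<Rightarrow> nat set set \<Rightarrow> nat list \<Rightarrow> bool" where
  "B_perm S B xs \<longleftrightarrow> distinct xs \<and> set xs = S \<and>
     (\<forall>i < length xs. same_component (restr B (set (take (Suc i) xs)))
                         (xs ! i) (Max (set (take (Suc i) xs))))"

definition alternating :: "nat list \<Rightarrow> bool" where
  "alternating xs \<longleftrightarrow> (\<forall>i. Suc i < length xs \<longrightarrow>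
      (even i \<longrightarrow> xs ! i > xs ! Suc i) \<and> (odd i \<longrightarrow> xs ! i < xs ! Suc i))"

definition Phat :: "nat set \<Rightarrow> nat set set \<Rightarrow> nat set set" where
  "Phat S B = {I. I \<subseteq> S \<and> (\<forall>C\<in>components (restr B I). even (card C))}"

definition is_chain :: "'a set set \<Rightarrow> 'a set set \<Rightarrow> bool" where
  "is_chain P C \<longleftrightarrow> C \<subseteq> P \<and> (\<forall>X\<in>C. \<forall>Y\<in>C. X \<subseteq> Y \<or> Y \<subseteq> X)"

definition is_max_chain :: "'a set set \<Rightarrow> 'a set set \<Rightarrow> bool" where
  "is_max_chain P C \<longleftrightarrow> is_chain P C \<and> (\<forall>D. is_chain P D \<and> C \<subseteq> D \<longrightarrow> D = C)"

definition max_chains_list :: "nat set \<Rightarrow> nat set set \<Rightarrow> nat set list set" where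
  "max_chains_list S B = {cs. sorted_wrt (\<subset>) cs \<and> is_max_chain (Phat S B) (set cs)}"

definition frakC :: "nat set set \<Rightarrow> nat set \<Rightarrow> nat set \<Rightarrow> nat set" where
  "frakC B I2 I1 = (THE C. C \<in> components (restr B I2) \<and> I2 - I1 \<subseteq> C)"

definition omega_ge :: "nat \<times> nat \<Rightarrow> nat \<times> nat \<Rightarrow> bool" where
  "omega_ge a b \<longleftrightarrow> (case a of (a1, a2) \<Rightarrow> case b of (b1, b2) \<Rightarrow>
      (a1 \<ge> a2 \<and> a2 \<ge> b1 \<and> b1 \<ge> b2) \<or> (a1 = b1 \<and> b1 \<ge> a2 \<and> a2 \<ge> b2))"

definition label_ge :: "nat \<times> (nat \<times> nat) \<Rightarrow> nat \<times> (nat \<times> nat) \<Rightarrow> bool" where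
  "label_ge p q \<longleftrightarrow> (case p of (x, \<alpha>) \<Rightarrow> case q of (y, \<beta>) \<Rightarrow>
      x > y \<or> (x = y \<and> omega_ge \<alpha> \<beta>))"

definition label_gt :: "nat \<times> (nat \<times> nat) \<Rightarrow> nat \<times> (nat \<times> nat) \<Rightarrow> bool" where
  "label_gt p q \<longleftrightarrow> label_ge p q \<and> p \<noteq> q"

definition mu :: "nat set set \<Rightarrow> nat set \<Rightarrow> nat set \<Rightarrow> nat \<times> (nat \<times> nat)" where
  "mu B I1 I2 = (Max (frakC B I2 I1), (Max (I2 - I1), Min (I2 - I1)))"

definition has_decreasing_position :: "nat set set \<Rightarrow> nat set list \<Rightarrow> bool" where
  "has_decreasing_position B cs \<longleftrightarrow> (\<exists>i. 1 \<le> i \<and> Suc i < length cs \<and>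
      label_gt (mu B (cs ! (i - 1)) (cs ! i)) (mu B (cs ! i) (cs ! Suc i)))"

definition perm_to_chain :: "nat list \<Rightarrow> nat set list" where
  "perm_to_chain xs = map (\<lambda>i. set (take (2 * i) xs)) [0..<Suc (length xs div 2)]"

end

theory Submission
  imports Defs
begin

text \<open>
  Every member of \<open>Phat S B\<close> is a disjoint union of components of even size, so consecutive
  members of a maximal chain differ by two elements lying in one component, and chordality
  (upper tails of members of \<open>B\<close> lie in \<open>B\<close>) makes \<open>Phat S B\<close> graded: maximal chains consist
  of such steps only. Listing each step as its larger element followed by its smaller one turns a
  chain into a word. If the chain has no decreasing position, the first label coordinate
  \<open>Max \<frakC>(I_{i+1}; I_i)\<close> is weakly increasing, hence equals \<open>Max I_{i+1}\<close>; where it stays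
  constant the second coordinate forces the word to rise between consecutive steps, so the word
  is alternating, and its \<open>B\<close>-permutation condition is witnessed by upper tails of the step
  components. Conversely, the even-length prefixes of an alternating \<open>B\<close>-permutation lie in
  \<open>Phat S B\<close>, and consecutive labels either increase in the first coordinate or have incomparable
  second coordinates.
\<close>

lemma componentsD:
  assumes "C \<in> components (restr B I)"
  shows "C \<in> B" "C \<subseteq> I" "\<And>J. J \<in> B \<Longrightarrow> J \<subseteq> I \<Longrightarrow> C \<subseteq> J \<Longrightarrow> J = C"
  using assms unfolding components_def restr_def by auto

lemma nth_notin_set_take:
  assumes "distinct xs" "i < length xs" "j \<le> i"
  shows "xs ! i \<notin> set (take j xs)"
proof
  assume "xs ! i \<in> set (take j xs)"
  then obtain p where "p < j" "p < length xs" "xs ! p = xs ! i"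
    by (auto simp: in_set_conv_nth)
  with assms show False using nth_eq_iff_index_eq by fastforce
qed

lemma set_take_double_Suc:
  assumes "2 * Suc l \<le> length xs"
  shows "set (take (2 * Suc l) xs)
           = insert (xs ! (2 * l)) (insert (xs ! Suc (2 * l)) (set (take (2 * l) xs)))"
proof -
  have "take (2 * Suc l) xs = take (2 * l) xs @ [xs ! (2 * l), xs ! Suc (2 * l)]"
    using assms by (simp add: take_Suc_conv_app_nth)
  thus ?thesis by auto
qed

lemma length_perm_to_chain: "length (perm_to_chain xs) = Suc (length xs div 2)"
  unfolding perm_to_chain_def by simp

lemma set_perm_to_chain:
  "set (perm_to_chain xs) = (\<lambda>i. set (take (2 * i) xs)) ` {..length xs div 2}"
  unfolding perm_to_chain_def by (simp add: atLeast0LessThan lessThan_Suc_atMost del: upt_Suc)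

lemma nth_perm_to_chain:
  "i < Suc (length xs div 2) \<Longrightarrow> perm_to_chain xs ! i = set (take (2 * i) xs)"
  unfolding perm_to_chain_def by (simp del: upt_Suc)

lemma is_max_chain_if_meets_all_cards:
  assumes chain: "is_chain P C"
    and cards: "\<And>X. X \<in> P \<Longrightarrow> finite X \<and> (\<exists>Y\<in>C. finite Y \<and> card Y = card X)"
  shows "is_max_chain P C"
  unfolding is_max_chain_def
proof (intro conjI chain allI impI)
  fix D assume D: "is_chain P D \<and> C \<subseteq> D"
  have "X \<in> C" if X: "X \<in> D" for X
  proof -
    have "X \<in> P" using X D unfolding is_chain_def by blast
    then obtain Y where Y: "Y \<in> C" "finite Y" "card Y = card X" "finite X"
      using cards by blast
    have "X \<subseteq> Y \<or> Y \<subseteq> X" using D X Y(1) unfolding is_chain_def by blast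
    hence "X = Y" using Y card_subset_eq by metis
    thus ?thesis using Y(1) by simp
  qed
  thus "D = C" using D by blast
qed

section \<open>Components and the poset \<open>Phat S B\<close>\<close>

locale finite_building_set =
  fixes S :: "nat set" and B :: "nat set set"
  assumes finite_S: "finite S" and building: "building_set S B"
begin

lemma mem_subset: "I \<in> B \<Longrightarrow> I \<subseteq> S"
  and singleton_mem: "i \<in> S \<Longrightarrow> {i} \<in> B"
  and Un_mem: "I \<in> B \<Longrightarrow> J \<in> B \<Longrightarrow> I \<inter> J \<noteq> {} \<Longrightarrow> I \<union> J \<in> B"
  and mem_nonempty: "I \<in> B \<Longrightarrow> I \<noteq> {}"
  using building unfolding building_set_def by blast+

lemma finite_mem: "I \<in> B \<Longrightarrow> finite I"
  using mem_subset finite_S finite_subset by blast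

lemma finite_subset_S: "I \<subseteq> S \<Longrightarrow> finite I"
  using finite_S finite_subset by blast

lemma ex_component_superset:
  assumes "D \<in> B" "D \<subseteq> I"
  shows "\<exists>C\<in>components (restr B I). D \<subseteq> C"
proof -
  have "finite B" using finite_subset[of B "Pow S"] mem_subset finite_S by auto
  hence "finite (restr B I)" by (simp add: restr_def)
  moreover have "D \<in> restr B I" using assms unfolding restr_def by auto
  ultimately obtain C where "C \<in> restr B I" "D \<subseteq> C" "\<forall>E\<in>restr B I. C \<subseteq> E \<longrightarrow> C = E"
    using finite_has_maximal2 by metis
  thus ?thesis unfolding components_def by auto
qed

lemma ex_component_containing: "x \<in> I \<Longrightarrow> I \<subseteq> S \<Longrightarrow> \<exists>C\<in>components (restr B I). x \<in> C"
  using ex_component_superset[of "{x}" I] singleton_mem by blast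

lemma component_absorbs:
  assumes C: "C \<in> components (restr B I)" and "D \<in> B" "D \<subseteq> I" "D \<inter> C \<noteq> {}"
  shows "D \<subseteq> C"
proof -
  have "D \<union> C \<in> B" using Un_mem assms componentsD(1)[OF C] by blast
  moreover have "D \<union> C \<subseteq> I" using assms componentsD(2)[OF C] by blast
  ultimately show ?thesis using componentsD(3)[OF C] by blast
qed

lemma component_unique:
  assumes "C \<in> components (restr B I)" "C' \<in> components (restr B I)" "x \<in> C" "x \<in> C'"
  shows "C = C'"
  using component_absorbs[OF assms(1) componentsD(1,2)[OF assms(2)]]
    component_absorbs[OF assms(2) componentsD(1,2)[OF assms(1)]] assms(3,4)
  by blast

lemma component_absorbs_components_of_subset:
  assumes "K \<in> components (restr B J)" "I \<subseteq> J"
    and "L \<in> components (restr B I)" "L \<inter> K \<noteq> {}"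
  shows "L \<subseteq> K"
  using component_absorbs[OF assms(1) componentsD(1)[OF assms(3)]] componentsD(2)[OF assms(3)] assms
  by blast

lemma same_component_restr_iff:
  "same_component (restr B I) x y \<longleftrightarrow> (\<exists>D\<in>B. D \<subseteq> I \<and> x \<in> D \<and> y \<in> D)"
proof
  assume "same_component (restr B I) x y"
  then obtain C where C: "C \<in> components (restr B I)" "x \<in> C" "y \<in> C"
    unfolding same_component_def by blast
  thus "\<exists>D\<in>B. D \<subseteq> I \<and> x \<in> D \<and> y \<in> D" using componentsD(1,2)[OF C(1)] by blast
next
  assume "\<exists>D\<in>B. D \<subseteq> I \<and> x \<in> D \<and> y \<in> D"
  then obtain D where D: "D \<in> B" "D \<subseteq> I" "x \<in> D" "y \<in> D" by blast
  thus "same_component (restr B I) x y"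
    unfolding same_component_def using ex_component_superset[OF D(1,2)] by blast
qed

lemma frakC_eqI:
  assumes "K \<in> components (restr B J)" "J - I \<subseteq> K" "J - I \<noteq> {}"
  shows "frakC B J I = K"
  unfolding frakC_def
proof (rule the_equality)
  show "K \<in> components (restr B J) \<and> J - I \<subseteq> K" using assms by auto
  fix C assume "C \<in> components (restr B J) \<and> J - I \<subseteq> C"
  thus "C = K" using component_unique assms by blast
qed

lemma empty_in_Phat: "{} \<in> Phat S B"
  unfolding Phat_def components_def restr_def using mem_nonempty by auto

lemma S_in_Phat: "\<forall>C\<in>components B. even (card C) \<Longrightarrow> S \<in> Phat S B"
proof -
  have "restr B S = B" using mem_subset unfolding restr_def by auto
  thus "\<forall>C\<in>components B. even (card C) \<Longrightarrow> S \<in> Phat S B" unfolding Phat_def by simp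
qed

text \<open>\<open>K \<inter> I\<close> is the disjoint union of the components of \<open>B|_I\<close> it meets.\<close>

lemma even_card_Int_Phat:
  assumes I: "I \<in> Phat S B"
    and closed: "\<And>L. L \<in> components (restr B I) \<Longrightarrow> L \<inter> K \<noteq> {} \<Longrightarrow> L \<subseteq> K"
  shows "even (card (K \<inter> I))"
proof -
  let ?F = "{L \<in> components (restr B I). L \<subseteq> K}"
  have "K \<inter> I = \<Union>?F"
  proof
    show "K \<inter> I \<subseteq> \<Union>?F"
    proof
      fix x assume x: "x \<in> K \<inter> I"
      moreover have "I \<subseteq> S" using I unfolding Phat_def by blast
      ultimately obtain C where C: "C \<in> components (restr B I)" "x \<in> C"
        using ex_component_containing by blast
      thus "x \<in> \<Union>?F" using closed x by blast
    qed
    show "\<Union>?F \<subseteq> K \<inter> I" using componentsD(2) by blast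
  qed
  moreover have "pairwise disjnt ?F"
    unfolding pairwise_def disjnt_def using component_unique by blast
  moreover have "\<And>A. A \<in> ?F \<Longrightarrow> finite A" using componentsD(1) finite_mem by blast
  ultimately have "card (K \<inter> I) = sum card ?F" using card_Union_disjoint by metis
  moreover have "even (sum card ?F)" using I unfolding Phat_def by (auto intro: dvd_sum)
  ultimately show ?thesis by simp
qed

lemma even_card_Phat: "I \<in> Phat S B \<Longrightarrow> even (card I)"
  using even_card_Int_Phat[of I I] componentsD(2) by simp

lemma Phat_insert_pair:
  assumes I: "I \<in> Phat S B" and new: "a \<notin> I" "b \<notin> I" "a \<noteq> b" "a \<in> S" "b \<in> S"
    and D: "D \<in> B" "D \<subseteq> insert a (insert b I)" "a \<in> D" "b \<in> D"
  shows "insert a (insert b I) \<in> Phat S B"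
proof -
  let ?J = "insert a (insert b I)"
  have IS: "I \<subseteq> S" and even_I: "\<forall>C\<in>components (restr B I). even (card C)"
    using I unfolding Phat_def by auto
  have I_sub_J: "I \<subseteq> ?J" by blast
  have "even (card K)" if K: "K \<in> components (restr B ?J)" for K
  proof (cases "a \<in> K \<or> b \<in> K")
    case True
    hence "a \<in> K" "b \<in> K" using component_absorbs[OF K D(1,2)] D(3,4) by blast+
    hence "K = insert a (insert b (K \<inter> I))" using componentsD(2)[OF K] by blast
    hence "card K = card (insert a (insert b (K \<inter> I)))" by (rule arg_cong)
    also have "\<dots> = card (K \<inter> I) + 2" using IS finite_subset_S new(1-3) by simp
    finally have "card K = card (K \<inter> I) + 2" .
    moreover have "even (card (K \<inter> I))"
      by (rule even_card_Int_Phat[OF I component_absorbs_components_of_subset[OF K I_sub_J]])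
    ultimately show ?thesis by simp
  next
    case False
    hence "K \<in> components (restr B I)"
      using componentsD[OF K] unfolding components_def restr_def by auto
    thus ?thesis using even_I by blast
  qed
  moreover have "?J \<subseteq> S" using IS new by auto
  ultimately show ?thesis unfolding Phat_def by blast
qed

text \<open>A component of \<open>B|_J\<close> containing exactly one of the two new elements would have odd size.\<close>

lemma Phat_cover_in_one_component:
  assumes I: "I \<in> Phat S B" and J: "J \<in> Phat S B" and "I \<subseteq> J"
    and new: "J - I = {a, b}"
  shows "\<exists>K\<in>components (restr B J). {a, b} \<subseteq> K"
proof -
  have JS: "J \<subseteq> S" and even_J: "\<forall>C\<in>components (restr B J). even (card C)"
    using J unfolding Phat_def by auto
  have IS: "I \<subseteq> S" using I unfolding Phat_def by simp
  have a: "a \<in> J" "a \<notin> I" using new by auto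
  obtain K where K: "K \<in> components (restr B J)" "a \<in> K"
    using ex_component_containing[OF a(1) JS] by blast
  have "b \<in> K"
  proof (rule ccontr)
    assume "b \<notin> K"
    hence "K = insert a (K \<inter> I)" using componentsD(2)[OF K(1)] K(2) new by auto
    hence "card K = card (insert a (K \<inter> I))" by (rule arg_cong)
    also have "\<dots> = Suc (card (K \<inter> I))"
      using a(2) finite_subset_S[of "K \<inter> I"] IS by (simp add: le_infI2)
    finally have "card K = Suc (card (K \<inter> I))" .
    moreover have "even (card (K \<inter> I))"
      by (rule even_card_Int_Phat[OF I component_absorbs_components_of_subset[OF K(1) \<open>I \<subseteq> J\<close>]])
    moreover have "even (card K)" using even_J K(1) by blast
    ultimately show False by simp
  qed
  thus ?thesis using K by blast
qed

end

section \<open>Alternating \<open>B\<close>-permutations give descent-free maximal chains\<close>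

locale alternating_B_perm = finite_building_set +
  fixes xs :: "nat list"
  assumes B_perm: "B_perm S B xs" and alternating: "alternating xs"
begin

lemma distinct: "distinct xs" and set_xs: "set xs = S"
  using B_perm unfolding B_perm_def by auto

lemma length_xs: "length xs = card S"
  using distinct set_xs distinct_card by metis

lemma B_perm_witness:
  "i < length xs \<Longrightarrow>
     \<exists>D\<in>B. D \<subseteq> set (take (Suc i) xs) \<and> xs ! i \<in> D \<and> Max (set (take (Suc i) xs)) \<in> D"
  using B_perm unfolding B_perm_def same_component_restr_iff by blast

lemma descent_at_even: "Suc i < length xs \<Longrightarrow> even i \<Longrightarrow> xs ! Suc i < xs ! i"
  and ascent_at_odd: "Suc i < length xs \<Longrightarrow> odd i \<Longrightarrow> xs ! i < xs ! Suc i"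
  using alternating unfolding alternating_def by blast+

text \<open>Since \<open>xs ! Suc (2 * l) < xs ! (2 * l)\<close>, both prefixes have the same maximum, so the
  witnesses of the two \<open>B\<close>-permutation conditions overlap and their union is in \<open>B\<close>.\<close>

lemma pair_and_Max_connected:
  assumes l: "2 * Suc l \<le> length xs"
  shows "\<exists>D\<in>B. D \<subseteq> set (take (2 * Suc l) xs) \<and> xs ! (2 * l) \<in> D \<and> xs ! Suc (2 * l) \<in> D
           \<and> Max (set (take (2 * Suc l) xs)) \<in> D"
proof -
  let ?P1 = "set (take (Suc (2 * l)) xs)" and ?P2 = "set (take (Suc (Suc (2 * l))) xs)"
  have i1: "2 * l < length xs" and i2: "Suc (2 * l) < length xs" using l by auto
  obtain D1 where D1: "D1 \<in> B" "D1 \<subseteq> ?P1" "xs ! (2 * l) \<in> D1" "Max ?P1 \<in> D1"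
    using B_perm_witness[OF i1] by blast
  obtain D2 where D2: "D2 \<in> B" "D2 \<subseteq> ?P2" "xs ! Suc (2 * l) \<in> D2" "Max ?P2 \<in> D2"
    using B_perm_witness[OF i2] by blast
  have P2: "?P2 = insert (xs ! Suc (2 * l)) ?P1" using i2 by (auto simp: take_Suc_conv_app_nth)
  have a_in: "xs ! (2 * l) \<in> ?P1" using i1 by (simp add: take_Suc_conv_app_nth)
  have "xs ! Suc (2 * l) < xs ! (2 * l)" using descent_at_even[OF i2] by simp
  also have "xs ! (2 * l) \<le> Max ?P1" using a_in by simp
  finally have "xs ! Suc (2 * l) \<le> Max ?P1" by simp
  moreover have "?P1 \<noteq> {}" using a_in by (metis empty_iff)
  ultimately have "Max ?P2 = Max ?P1" unfolding P2 by (simp add: max_absorb2)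
  hence "D1 \<union> D2 \<in> B" using Un_mem[OF D1(1) D2(1)] D1(4) D2(4) by auto
  moreover have "D1 \<union> D2 \<subseteq> ?P2" using D1(2) D2(2) P2 by auto
  ultimately show ?thesis using D1 D2 by (intro bexI[of _ "D1 \<union> D2"]) (auto simp: numeral_2_eq_2)
qed

lemma prefix_in_Phat: "2 * l \<le> length xs \<Longrightarrow> set (take (2 * l) xs) \<in> Phat S B"
proof (induction l)
  case 0 thus ?case using empty_in_Phat by simp
next
  case (Suc l)
  let ?a = "xs ! (2 * l)" and ?b = "xs ! Suc (2 * l)"
  have i1: "2 * l < length xs" and i2: "Suc (2 * l) < length xs" using Suc.prems by auto
  obtain D where "D \<in> B" "D \<subseteq> set (take (2 * Suc l) xs)" "?a \<in> D" "?b \<in> D"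
    using pair_and_Max_connected[OF Suc.prems] by blast
  moreover have "?a \<notin> set (take (2 * l) xs)" "?b \<notin> set (take (2 * l) xs)"
    using nth_notin_set_take[OF distinct] i1 i2 by simp_all
  moreover have "?a \<noteq> ?b" using distinct i1 i2 nth_eq_iff_index_eq by fastforce
  moreover have "?a \<in> S" "?b \<in> S" using set_xs i1 i2 nth_mem by blast+
  ultimately show ?case
    unfolding set_take_double_Suc[OF Suc.prems]
    using Phat_insert_pair[OF Suc.IH] Suc.prems set_take_double_Suc[OF Suc.prems] by simp
qed

lemma prefix_step_diff:
  assumes l: "2 * Suc l \<le> length xs"
  shows "set (take (2 * Suc l) xs) - set (take (2 * l) xs) = {xs ! (2 * l), xs ! Suc (2 * l)}"
    and "Max (set (take (2 * Suc l) xs) - set (take (2 * l) xs)) = xs ! (2 * l)"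
    and "Min (set (take (2 * Suc l) xs) - set (take (2 * l) xs)) = xs ! Suc (2 * l)"
proof -
  have i1: "2 * l < length xs" and i2: "Suc (2 * l) < length xs" using l by auto
  show diff: "set (take (2 * Suc l) xs) - set (take (2 * l) xs) = {xs ! (2 * l), xs ! Suc (2 * l)}"
    using set_take_double_Suc[OF l] nth_notin_set_take[OF distinct] i1 i2 by auto
  have "xs ! Suc (2 * l) < xs ! (2 * l)" using descent_at_even[OF i2] by simp
  thus "Max (set (take (2 * Suc l) xs) - set (take (2 * l) xs)) = xs ! (2 * l)"
    and "Min (set (take (2 * Suc l) xs) - set (take (2 * l) xs)) = xs ! Suc (2 * l)"
    unfolding diff by simp_all
qed

lemma mu_prefix_step:
  assumes l: "2 * Suc l \<le> length xs"
  shows "mu B (set (take (2 * l) xs)) (set (take (2 * Suc l) xs))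
         = (Max (set (take (2 * Suc l) xs)), (xs ! (2 * l), xs ! Suc (2 * l)))"
proof -
  let ?I = "set (take (2 * l) xs)" and ?J = "set (take (2 * Suc l) xs)"
  obtain D where D: "D \<in> B" "D \<subseteq> ?J" "xs ! (2 * l) \<in> D" "xs ! Suc (2 * l) \<in> D" "Max ?J \<in> D"
    using pair_and_Max_connected[OF l] by blast
  obtain K where K: "K \<in> components (restr B ?J)" "D \<subseteq> K"
    using ex_component_superset[OF D(1,2)] by blast
  have "frakC B ?J ?I = K"
    by (rule frakC_eqI[OF K(1)]) (use prefix_step_diff(1)[OF l] D K in auto)
  moreover have "Max K = Max ?J"
    using componentsD(1,2)[OF K(1)] K(2) D(5) finite_mem
    by (intro antisym Max_mono Max_ge) auto
  ultimately show ?thesis unfolding mu_def using prefix_step_diff[OF l] by simp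
qed

lemma perm_to_chain_max_chain:
  assumes "even (card S)"
  shows "perm_to_chain xs \<in> max_chains_list S B"
proof -
  obtain k where len: "length xs = 2 * k" using assms length_xs by (metis evenE)
  let ?cs = "perm_to_chain xs"
  have L: "length ?cs = Suc k" using length_perm_to_chain len by simp
  have N: "\<And>i. i < Suc k \<Longrightarrow> ?cs ! i = set (take (2 * i) xs)"
    using nth_perm_to_chain len by simp
  have "sorted_wrt (\<subset>) ?cs"
    unfolding sorted_wrt_iff_nth_less
  proof (intro allI impI)
    fix i j assume ij: "i < j" "j < length ?cs"
    have "xs ! (2 * i) \<in> set (take (2 * j) xs)"
      using ij L len by (auto simp: in_set_conv_nth intro!: exI[of _ "2 * i"])
    moreover have "xs ! (2 * i) \<notin> set (take (2 * i) xs)"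
      using nth_notin_set_take[OF distinct, of "2 * i" "2 * i"] ij L len by simp
    moreover have "set (take (2 * i) xs) \<subseteq> set (take (2 * j) xs)"
      using ij by (intro set_take_subset_set_take) simp
    ultimately show "?cs ! i \<subset> ?cs ! j" using N ij L by auto
  qed
  moreover have "is_max_chain (Phat S B) (set ?cs)"
  proof (rule is_max_chain_if_meets_all_cards)
    have "set (take (2 * i) xs) \<subseteq> set (take (2 * j) xs)
          \<or> set (take (2 * j) xs) \<subseteq> set (take (2 * i) xs)" for i j
      using nat_le_linear[of i j] set_take_subset_set_take[of "2 * i" "2 * j" xs]
        set_take_subset_set_take[of "2 * j" "2 * i" xs] by auto
    thus "is_chain (Phat S B) (set ?cs)"
      unfolding is_chain_def set_perm_to_chain using prefix_in_Phat len by auto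
    fix X assume X: "X \<in> Phat S B"
    hence "X \<subseteq> S" unfolding Phat_def by blast
    hence fin: "finite X" and "card X \<le> 2 * k"
      using finite_subset_S card_mono[OF finite_S] len length_xs by metis+
    moreover obtain n where n: "card X = 2 * n" using even_card_Phat[OF X] by blast
    ultimately have "set (take (2 * n) xs) \<in> set ?cs" "card (set (take (2 * n) xs)) = card X"
      using len distinct by (auto simp: set_perm_to_chain distinct_card)
    thus "finite X \<and> (\<exists>Y\<in>set ?cs. finite Y \<and> card Y = card X)" using fin by blast
  qed
  ultimately show ?thesis unfolding max_chains_list_def by blast
qed

text \<open>Consecutive labels have weakly increasing first coordinates, and when these agree the
  second coordinates are incomparable by alternation and distinctness.\<close>

lemma perm_to_chain_no_descent:
  shows "\<not> has_decreasing_position B (perm_to_chain xs)"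
proof
  let ?cs = "perm_to_chain xs"
  assume "has_decreasing_position B ?cs"
  then obtain i where i: "1 \<le> i" "Suc i < length ?cs"
    "label_gt (mu B (?cs ! (i - 1)) (?cs ! i)) (mu B (?cs ! i) (?cs ! Suc i))"
    unfolding has_decreasing_position_def by blast
  then obtain l where l: "i = Suc l" by (cases i) auto
  have l1: "2 * Suc l \<le> length xs" and l2: "2 * Suc (Suc l) \<le> length xs"
    using i(2) l length_perm_to_chain by auto
  have chain_nth: "?cs ! j = set (take (2 * j) xs)" if "j \<le> Suc (Suc l)" for j
    using that i(2) l by (intro nth_perm_to_chain) (simp add: length_perm_to_chain)
  have "Max (set (take (2 * Suc l) xs)) \<le> Max (set (take (2 * Suc (Suc l)) xs))"
    using l1 by (intro Max_mono set_take_subset_set_take) (auto simp: take_Suc_conv_app_nth)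
  moreover have "xs ! Suc (2 * l) < xs ! (2 * Suc l)"
    using ascent_at_odd[of "Suc (2 * l)"] l2 by simp
  moreover have "xs ! (2 * l) \<noteq> xs ! (2 * Suc l)"
    using distinct l2 nth_eq_iff_index_eq by fastforce
  moreover have "label_gt (Max (set (take (2 * Suc l) xs)), (xs ! (2 * l), xs ! Suc (2 * l)))
      (Max (set (take (2 * Suc (Suc l)) xs)), (xs ! (2 * Suc l), xs ! Suc (2 * Suc l)))"
    using i(3) mu_prefix_step[OF l1] mu_prefix_step[OF l2]
    by (simp add: l chain_nth del: mult_Suc_right)
  ultimately show False
    unfolding label_gt_def label_ge_def omega_ge_def by (auto simp del: mult_Suc_right)
qed

lemma nth_eq_Max_Min_chain_step:
  assumes l: "2 * Suc l \<le> length xs"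
  shows "xs ! (2 * l) = Max (perm_to_chain xs ! Suc l - perm_to_chain xs ! l)"
    and "xs ! Suc (2 * l) = Min (perm_to_chain xs ! Suc l - perm_to_chain xs ! l)"
proof -
  have lt: "Suc l < Suc (length xs div 2)" using l by presburger
  hence "perm_to_chain xs ! Suc l - perm_to_chain xs ! l
         = set (take (2 * Suc l) xs) - set (take (2 * l) xs)"
    using nth_perm_to_chain[OF lt] nth_perm_to_chain[of l] by simp
  thus "xs ! (2 * l) = Max (perm_to_chain xs ! Suc l - perm_to_chain xs ! l)"
    and "xs ! Suc (2 * l) = Min (perm_to_chain xs ! Suc l - perm_to_chain xs ! l)"
    using prefix_step_diff(2,3)[OF l] by simp_all
qed

end

lemma perm_to_chain_inj:
  assumes xs: "alternating_B_perm S B xs" and ys: "alternating_B_perm S B ys"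
    and even_S: "even (card S)" and chain_eq: "perm_to_chain xs = perm_to_chain ys"
  shows "xs = ys"
proof (rule nth_equalityI)
  interpret x: alternating_B_perm S B xs by (rule xs)
  interpret y: alternating_B_perm S B ys by (rule ys)
  show len: "length xs = length ys" using x.length_xs y.length_xs by simp
  fix j assume j: "j < length xs"
  define l where "l = j div 2"
  have "2 * Suc l \<le> length xs" "2 * Suc l \<le> length ys"
    using j len x.length_xs even_S l_def by presburger+
  moreover have "j = 2 * l \<or> j = Suc (2 * l)" using l_def by presburger
  ultimately show "xs ! j = ys ! j"
    using x.nth_eq_Max_Min_chain_step y.nth_eq_Max_Min_chain_step chain_eq by metis
qed

section \<open>Chordality makes \<open>Phat S B\<close> graded\<close>

locale chordal_building_set = finite_building_set +
  assumes chordal: "chordal B"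
begin

lemma upper_tail_mem:
  assumes I: "I \<in> B" and a: "a \<in> I"
  shows "{c \<in> I. a \<le> c} \<in> B"
proof -
  define xs where "xs = sorted_list_of_set I"
  have sorted: "sorted_wrt (<) xs" and set_xs: "set xs = I" and len: "length xs = card I"
    using finite_mem[OF I] unfolding xs_def by (auto simp: strict_sorted_list_of_set)
  obtain j where j: "j < length xs" "xs ! j = a" using a set_xs by (metis in_set_conv_nth)
  have tail: "set (drop j xs) = {c \<in> I. a \<le> c}"
  proof
    show "set (drop j xs) \<subseteq> {c \<in> I. a \<le> c}"
    proof
      fix c assume "c \<in> set (drop j xs)"
      then obtain q where "q < length (drop j xs)" "c = drop j xs ! q" by (metis in_set_conv_nth)
      hence q: "j + q < length xs" "c = xs ! (j + q)" by auto
      hence "a \<le> c" using j sorted_wrt_nth_less[OF sorted, of j "j + q"] by (cases q) auto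
      thus "c \<in> {c \<in> I. a \<le> c}" using q set_xs by auto
    qed
    show "{c \<in> I. a \<le> c} \<subseteq> set (drop j xs)"
    proof
      fix c assume c: "c \<in> {c \<in> I. a \<le> c}"
      then obtain p where p: "p < length xs" "xs ! p = c" using set_xs by (auto simp: in_set_conv_nth)
      have "\<not> p < j"
        using sorted_wrt_nth_less[OF sorted, of p j] j c p by auto
      hence "drop j xs ! (p - j) = c" "p - j < length (drop j xs)" using p by auto
      thus "c \<in> set (drop j xs)" by (metis nth_mem)
    qed
  qed
  consider "j = 0" | "Suc j = length xs" | "1 < Suc j" "Suc j < card I"
    using j(1) len by linarith
  thus ?thesis
  proof cases
    case 1 thus ?thesis using tail set_xs I by simp
  next
    case 2
    hence "drop j xs = [a]" using Cons_nth_drop_Suc[OF j(1)] j by simp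
    hence "{c \<in> I. a \<le> c} = {a}" using tail by simp
    thus ?thesis using singleton_mem mem_subset I a by auto
  next
    case 3
    hence "set (drop (Suc j - 1) xs) \<in> B" using chordal I unfolding chordal_def xs_def by blast
    thus ?thesis using tail by simp
  qed
qed

text \<open>Inside a component \<open>K\<close> of \<open>B|_J\<close> that meets \<open>J - I\<close>, the two largest elements \<open>a > b\<close> of
  \<open>K - I\<close> exist by parity, and the upper tail of \<open>K\<close> from \<open>b\<close> connects them inside \<open>I \<union> {a, b}\<close>.\<close>

lemma Phat_graded:
  assumes I: "I \<in> Phat S B" and J: "J \<in> Phat S B" and IJ: "I \<subset> J"
  shows "\<exists>a b. a \<noteq> b \<and> a \<in> J - I \<and> b \<in> J - I \<and> insert a (insert b I) \<in> Phat S B"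
proof -
  have JS: "J \<subseteq> S" and even_J: "\<forall>C\<in>components (restr B J). even (card C)"
    using J unfolding Phat_def by auto
  obtain x where x: "x \<in> J" "x \<notin> I" using IJ by blast
  obtain K where K: "K \<in> components (restr B J)" "x \<in> K"
    using ex_component_containing x JS by blast
  have KB: "K \<in> B" and KJ: "K \<subseteq> J" using componentsD(1,2)[OF K(1)] by auto
  have fin: "finite (K - I)" using finite_mem[OF KB] by simp
  have "even (card (K \<inter> I))"
    by (rule even_card_Int_Phat[OF I component_absorbs_components_of_subset[OF K(1) psubset_imp_subset[OF IJ]]])
  moreover have "even (card K)" using even_J K(1) by blast
  moreover have "card (K - I) = card K - card (K \<inter> I)" "card (K \<inter> I) \<le> card K"
    using finite_mem[OF KB] by (simp_all add: card_Diff_subset_Int card_mono)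
  moreover have "card (K - I) \<noteq> 0" using fin K(2) x by auto
  ultimately have two: "card (K - I) \<ge> 2" by presburger
  define a where "a = Max (K - I)"
  have "K - I \<noteq> {}" using two by (metis card.empty not_numeral_le_zero)
  hence a_in: "a \<in> K - I" unfolding a_def using fin by (intro Max_in)
  have "card (K - I - {a}) \<ge> 1" using two a_in fin by (simp add: card_Diff_singleton)
  hence "K - I - {a} \<noteq> {}" by (metis card.empty not_one_le_zero)
  define b where "b = Max (K - I - {a})"
  have b_in: "b \<in> K - I - {a}" unfolding b_def by (rule Max_in) (use \<open>K - I - {a} \<noteq> {}\<close> fin in auto)
  have "b \<le> a" unfolding a_def using b_in fin by (intro Max_ge) auto
  have below_b: "c \<le> b" if "c \<in> K - I - {a}" for c unfolding b_def using fin that by (intro Max_ge) auto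
  have "insert a (insert b I) \<in> Phat S B"
  proof (rule Phat_insert_pair[OF I _ _ _ _ _ upper_tail_mem[OF KB, of b]])
    show "a \<notin> I" "b \<notin> I" "a \<noteq> b" "a \<in> S" "b \<in> S" "b \<in> K" using a_in b_in KJ JS by auto
    show "{c \<in> K. b \<le> c} \<subseteq> insert a (insert b I)"
    proof
      fix c assume "c \<in> {c \<in> K. b \<le> c}"
      thus "c \<in> insert a (insert b I)" using below_b[of c] by (cases "c \<in> I \<or> c = a") auto
    qed
    show "a \<in> {c \<in> K. b \<le> c}" "b \<in> {c \<in> K. b \<le> c}" using a_in b_in \<open>b \<le> a\<close> by auto
  qed
  moreover have "a \<noteq> b \<and> a \<in> J - I \<and> b \<in> J - I" using a_in b_in KJ by auto
  ultimately show ?thesis by blast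
qed

end

section \<open>Descent-free maximal chains come from alternating \<open>B\<close>-permutations\<close>

locale descent_free_chain = chordal_building_set +
  fixes k :: nat and cs :: "nat set list"
  assumes card_S: "card S = 2 * k" and even_components: "\<forall>C\<in>components B. even (card C)"
    and max_chain: "cs \<in> max_chains_list S B"
    and no_descent: "\<not> has_decreasing_position B cs"
begin

lemma sorted_cs: "sorted_wrt (\<subset>) cs" and chain_cs: "is_chain (Phat S B) (set cs)"
  and maximal_cs: "\<And>D. is_chain (Phat S B) D \<Longrightarrow> set cs \<subseteq> D \<Longrightarrow> D = set cs"
  using max_chain unfolding max_chains_list_def is_max_chain_def by auto

lemma nth_in_Phat: "i < length cs \<Longrightarrow> cs ! i \<in> Phat S B"
  using chain_cs unfolding is_chain_def by auto

lemma nth_subset_S: "i < length cs \<Longrightarrow> cs ! i \<subseteq> S"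
  using nth_in_Phat unfolding Phat_def by blast

lemma nth_psubset: "i < j \<Longrightarrow> j < length cs \<Longrightarrow> cs ! i \<subset> cs ! j"
  using sorted_wrt_nth_less[OF sorted_cs] by blast

lemma nth_subset: "i \<le> j \<Longrightarrow> j < length cs \<Longrightarrow> cs ! i \<subseteq> cs ! j"
  using nth_psubset[of i j] by (cases "i = j") auto

lemma mem_if_comparable:
  assumes "X \<in> Phat S B" "\<And>Y. Y \<in> set cs \<Longrightarrow> X \<subseteq> Y \<or> Y \<subseteq> X"
  shows "X \<in> set cs"
  using maximal_cs[of "insert X (set cs)"] chain_cs assms unfolding is_chain_def by auto

lemma nth_0: "cs ! 0 = {}" and cs_nonempty: "cs \<noteq> []"
proof -
  obtain p where p: "p < length cs" "cs ! p = {}"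
    using mem_if_comparable[OF empty_in_Phat] by (auto simp: in_set_conv_nth)
  thus "cs \<noteq> []" by auto
  show "cs ! 0 = {}" using p nth_subset[of 0 p] by auto
qed

lemma nth_last: "cs ! (length cs - 1) = S"
proof -
  obtain p where p: "p < length cs" "cs ! p = S"
    using mem_if_comparable[OF S_in_Phat[OF even_components]] nth_subset_S
    by (auto simp: in_set_conv_nth)
  hence "S \<subseteq> cs ! (length cs - 1)" using nth_subset[of p "length cs - 1"] by simp
  thus ?thesis using nth_subset_S[of "length cs - 1"] cs_nonempty by simp
qed

text \<open>By gradedness a cover of size at least four could be refined inside \<open>cs\<close>.\<close>

lemma card_step:
  assumes i: "Suc i < length cs"
  shows "card (cs ! Suc i - cs ! i) = 2"
proof (rule ccontr)
  assume not_two: "card (cs ! Suc i - cs ! i) \<noteq> 2"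
  let ?I = "cs ! i" and ?J = "cs ! Suc i"
  have IP: "?I \<in> Phat S B" and JP: "?J \<in> Phat S B" using nth_in_Phat i by auto
  have IJ: "?I \<subset> ?J" using nth_psubset i by auto
  have fin: "finite ?J" "finite ?I" using nth_subset_S i finite_subset_S by auto
  have "card ?I < card ?J" "card (?J - ?I) = card ?J - card ?I"
    using IJ fin by (simp_all add: psubset_card_mono card_Diff_subset)
  hence big: "card ?J \<ge> card ?I + 4"
    using not_two even_card_Phat[OF IP] even_card_Phat[OF JP] by presburger
  obtain a b where ab: "a \<noteq> b" "a \<in> ?J - ?I" "b \<in> ?J - ?I" "insert a (insert b ?I) \<in> Phat S B"
    using Phat_graded[OF IP JP IJ] by blast
  let ?X = "insert a (insert b ?I)"
  have "?X \<in> set cs"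
  proof (rule mem_if_comparable[OF ab(4)])
    fix Y assume "Y \<in> set cs"
    then obtain q where q: "q < length cs" "Y = cs ! q" by (metis in_set_conv_nth)
    show "?X \<subseteq> Y \<or> Y \<subseteq> ?X"
      using nth_subset[of q i] nth_subset[of "Suc i" q] q i ab IJ by (cases "q \<le> i") auto
  qed
  then obtain p where p: "p < length cs" "cs ! p = ?X" by (metis in_set_conv_nth)
  show False
  proof (cases "p \<le> i")
    case True thus False using nth_subset[of p i] p i ab by auto
  next
    case False
    hence "card ?J \<le> card ?X" using nth_subset[of "Suc i" p] p fin by (simp add: card_mono)
    thus False using ab fin big by simp
  qed
qed

lemma card_nth: "i < length cs \<Longrightarrow> card (cs ! i) = 2 * i"
proof (induction i)
  case 0 thus ?case using nth_0 by simp
next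
  case (Suc i)
  have "cs ! i \<subseteq> cs ! Suc i" "finite (cs ! Suc i)"
    using nth_subset nth_subset_S finite_subset_S Suc.prems by auto
  thus ?case using card_step[OF Suc.prems] Suc card_Diff_subset[of "cs ! i" "cs ! Suc i"]
    by (simp add: card_mono finite_subset)
qed

lemma length_cs: "length cs = Suc k"
  using card_nth[of "length cs - 1"] nth_last card_S cs_nonempty by (cases cs) auto

definition new_max :: "nat \<Rightarrow> nat" where "new_max i = Max (cs ! Suc i - cs ! i)"
definition new_min :: "nat \<Rightarrow> nat" where "new_min i = Min (cs ! Suc i - cs ! i)"
definition step_component :: "nat \<Rightarrow> nat set" where
  "step_component i = frakC B (cs ! Suc i) (cs ! i)"

lemma step_diff:
  assumes i: "i < k"
  shows "cs ! Suc i - cs ! i = {new_max i, new_min i}" and "new_min i < new_max i"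
    and "cs ! Suc i = insert (new_max i) (insert (new_min i) (cs ! i))"
    and "new_max i \<notin> cs ! i" "new_min i \<notin> cs ! i"
proof -
  have "card (cs ! Suc i - cs ! i) = 2" using card_step i length_cs by simp
  then obtain x y where xy: "cs ! Suc i - cs ! i = {x, y}" "x < y"
    by (metis card_2_iff linorder_neqE_nat insert_commute)
  hence "new_max i = y" "new_min i = x" unfolding new_max_def new_min_def by auto
  thus diff: "cs ! Suc i - cs ! i = {new_max i, new_min i}" and "new_min i < new_max i"
    using xy by auto
  show "cs ! Suc i = insert (new_max i) (insert (new_min i) (cs ! i))"
    using diff nth_subset[of i "Suc i"] i length_cs by auto
  show "new_max i \<notin> cs ! i" "new_min i \<notin> cs ! i" using diff by auto
qed

lemma step_component:
  assumes i: "i < k"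
  shows "step_component i \<in> B" "step_component i \<subseteq> cs ! Suc i"
    and "new_max i \<in> step_component i" "new_min i \<in> step_component i"
proof -
  obtain C where C: "C \<in> components (restr B (cs ! Suc i))" "{new_max i, new_min i} \<subseteq> C"
    using Phat_cover_in_one_component[OF nth_in_Phat nth_in_Phat nth_subset step_diff(1)[OF i]]
      i length_cs by auto
  have "step_component i = C"
    unfolding step_component_def by (rule frakC_eqI[OF C(1)]) (use C step_diff(1)[OF i] in auto)
  thus "step_component i \<in> B" "step_component i \<subseteq> cs ! Suc i"
    "new_max i \<in> step_component i" "new_min i \<in> step_component i"
    using C componentsD(1,2)[OF C(1)] by auto
qed

lemma mu_step: "mu B (cs ! i) (cs ! Suc i) = (Max (step_component i), (new_max i, new_min i))"
  unfolding mu_def step_component_def new_max_def new_min_def by simp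

lemma not_label_gt_step:
  assumes "Suc i < k"
  shows "\<not> label_gt (Max (step_component i), (new_max i, new_min i))
                     (Max (step_component (Suc i)), (new_max (Suc i), new_min (Suc i)))"
proof
  assume "label_gt (Max (step_component i), (new_max i, new_min i))
                   (Max (step_component (Suc i)), (new_max (Suc i), new_min (Suc i)))"
  hence "has_decreasing_position B cs"
    unfolding has_decreasing_position_def
    using mu_step[of i] mu_step[of "Suc i"] assms length_cs
    by (intro exI[of _ "Suc i"]) simp
  thus False using no_descent by simp
qed

lemma Max_step_component_le_Suc: "Suc i < k \<Longrightarrow> Max (step_component i) \<le> Max (step_component (Suc i))"
  using not_label_gt_step unfolding label_gt_def label_ge_def by fastforce

lemma Max_step_component_mono: "j \<le> i \<Longrightarrow> i < k \<Longrightarrow> Max (step_component j) \<le> Max (step_component i)"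
  by (rule lift_Suc_mono_le_ivl[of "{m. Suc m < k}"]) (auto intro: Max_step_component_le_Suc)

lemma ex_step_adding:
  "m \<in> cs ! Suc i \<Longrightarrow> \<exists>j\<le>i. m \<in> cs ! Suc j \<and> m \<notin> cs ! j"
proof (induction i)
  case 0 thus ?case using nth_0 by auto
next
  case (Suc i) thus ?case by (cases "m \<in> cs ! Suc i") (auto intro: le_SucI)
qed

text \<open>The maximum \<open>m\<close> of \<open>cs ! Suc i\<close> is the maximum of the component of the step \<open>j \<le> i\<close>
  that added it; monotonicity transfers this to step \<open>i\<close>.\<close>

lemma Max_step_component:
  assumes i: "i < k"
  shows "Max (step_component i) = Max (cs ! Suc i)" "Max (cs ! Suc i) \<in> step_component i"
proof -
  let ?m = "Max (cs ! Suc i)"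
  have fin: "finite (cs ! Suc i)" using nth_subset_S finite_subset_S i length_cs by simp
  moreover have "cs ! Suc i \<noteq> {}" using step_diff(3)[OF i] by blast
  ultimately have "?m \<in> cs ! Suc i" by (rule Max_in)
  then obtain j where j: "j \<le> i" "?m \<in> cs ! Suc j" "?m \<notin> cs ! j" using ex_step_adding by blast
  have j_k: "j < k" using j(1) i by simp
  hence "?m \<in> {new_max j, new_min j}" using step_diff(1)[OF j_k] j by blast
  hence "?m \<in> step_component j" using step_component(3,4)[OF j_k] by auto
  moreover have "step_component j \<subseteq> cs ! Suc i"
    using step_component(2)[of j] nth_subset[of "Suc j" "Suc i"] j i length_cs by auto
  ultimately have "Max (step_component j) = ?m"
    using fin by (intro antisym Max_ge Max_mono) (auto intro: finite_subset)
  hence "?m \<le> Max (step_component i)" using Max_step_component_mono[OF j(1) i] by simp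
  moreover have "Max (step_component i) \<le> ?m"
    using step_component(2,3)[OF i] fin by (intro Max_mono) auto
  ultimately show eq: "Max (step_component i) = ?m" by simp
  have "finite (step_component i)" "step_component i \<noteq> {}"
    using step_component(2,3)[OF i] fin finite_subset by auto
  thus "?m \<in> step_component i" using eq by (metis Max_in)
qed

text \<open>If \<open>new_max (Suc i) \<le> new_min i\<close>, then \<open>cs ! Suc i\<close> and \<open>cs ! Suc (Suc i)\<close> have the same maximum, hence the first label
  coordinates agree, and \<open>new_max i > new_min i \<ge> new_max (Suc i) > new_min (Suc i)\<close> makes
  position \<open>Suc i\<close> decreasing.\<close>

lemma new_min_less_next_new_max:
  assumes i: "Suc i < k"
  shows "new_min i < new_max (Suc i)"
proof (rule ccontr)
  assume "\<not> new_min i < new_max (Suc i)"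
  hence le: "new_max (Suc i) \<le> new_min i" by simp
  have i1: "i < k" using i by simp
  have fin: "finite (cs ! Suc i)" using nth_subset_S finite_subset_S i length_cs by simp
  have "new_min i \<in> cs ! Suc i" using step_diff(3)[OF i1] by simp
  hence "new_min i \<le> Max (cs ! Suc i)" "cs ! Suc i \<noteq> {}" using fin by auto
  moreover have "Max (cs ! Suc (Suc i))
      = max (new_max (Suc i)) (max (new_min (Suc i)) (Max (cs ! Suc i)))"
    unfolding step_diff(3)[OF i] using fin calculation(2) by (simp add: Max_insert)
  ultimately have "Max (step_component (Suc i)) = Max (step_component i)"
    using Max_step_component(1)[OF i] Max_step_component(1)[OF i1] le step_diff(2)[OF i] by simp
  moreover have "new_max i \<noteq> new_max (Suc i)" using step_diff(3)[OF i1] step_diff(4)[OF i] by auto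
  ultimately have "label_gt (Max (step_component i), (new_max i, new_min i))
      (Max (step_component (Suc i)), (new_max (Suc i), new_min (Suc i)))"
    unfolding label_gt_def label_ge_def omega_ge_def
    using le step_diff(2)[OF i1] step_diff(2)[OF i] by auto
  thus False using not_label_gt_step[OF i] by simp
qed

definition letter :: "nat \<Rightarrow> nat" where
  "letter j = (if even j then new_max (j div 2) else new_min (j div 2))"

definition word :: "nat list" where "word = map letter [0..<2 * k]"

lemma length_word: "length word = 2 * k"
  unfolding word_def by simp

lemma nth_word: "j < 2 * k \<Longrightarrow> word ! j = letter j"
  unfolding word_def by simp

lemma letter_even: "letter (2 * i) = new_max i" and letter_odd: "letter (Suc (2 * i)) = new_min i"
  unfolding letter_def by simp_all

lemma set_take_word: "m \<le> 2 * k \<Longrightarrow> set (take m word) = letter ` {..<m}"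
  unfolding word_def by (simp add: take_map take_upt lessThan_atLeast0)

lemma set_take_even_word: "i \<le> k \<Longrightarrow> set (take (2 * i) word) = cs ! i"
proof (induction i)
  case 0 thus ?case using nth_0 by simp
next
  case (Suc i)
  have "{..<2 * Suc i} = insert (2 * i) (insert (Suc (2 * i)) {..<2 * i})" by auto
  hence "letter ` {..<2 * Suc i} = insert (new_max i) (insert (new_min i) (letter ` {..<2 * i}))"
    using letter_even letter_odd by simp
  also have "\<dots> = cs ! Suc i"
    using Suc set_take_word[of "2 * i"] step_diff(3)[of i] by simp
  finally show ?case using set_take_word[of "2 * Suc i"] Suc.prems by simp
qed

lemma set_take_odd_word: "i < k \<Longrightarrow> set (take (Suc (2 * i)) word) = insert (new_max i) (cs ! i)"
  using set_take_word[of "Suc (2 * i)"] set_take_word[of "2 * i"] set_take_even_word[of i]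
    letter_even lessThan_Suc
  by simp

lemma set_word: "set word = S"
  using set_take_even_word[of k] nth_last length_cs length_word by simp

lemma alternating_word: "alternating word"
  unfolding alternating_def
proof (intro allI impI conjI)
  fix j assume j: "Suc j < length word"
  define i where "i = j div 2"
  show "word ! Suc j < word ! j" if "even j"
  proof -
    have "j = 2 * i" "i < k" using that j length_word i_def by auto
    thus ?thesis using nth_word j length_word letter_even letter_odd step_diff(2) by simp
  qed
  show "word ! j < word ! Suc j" if "odd j"
  proof -
    have "j = Suc (2 * i)" "Suc j = 2 * Suc i" using that i_def by presburger+
    moreover have "Suc i < k" using j length_word calculation by simp
    ultimately show ?thesis
      using nth_word j length_word letter_even letter_odd new_min_less_next_new_max
      by (simp del: mult_Suc_right)
  qed
qed

lemma new_min_connected_to_Max: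
  assumes "i < k"
  shows "\<exists>D\<in>B. D \<subseteq> cs ! Suc i \<and> new_min i \<in> D \<and> Max (cs ! Suc i) \<in> D"
  using step_component(1,2,4)[OF assms] Max_step_component(2)[OF assms] by blast

text \<open>Unless \<open>new_max i\<close> is itself the maximum, the upper tail of the step component from
  \<open>new_max i\<close> avoids \<open>new_min i\<close> and contains the maximum.\<close>

lemma new_max_connected_to_Max:
  assumes i: "i < k"
  shows "\<exists>D\<in>B. D \<subseteq> insert (new_max i) (cs ! i) \<and> new_max i \<in> D
           \<and> Max (insert (new_max i) (cs ! i)) \<in> D"
proof (cases "Max (insert (new_max i) (cs ! i)) = new_max i")
  case True
  thus ?thesis using singleton_mem[of "new_max i"] step_component(1,3)[OF i] mem_subset by auto
next
  case False
  let ?P = "insert (new_max i) (cs ! i)" and ?T = "{c \<in> step_component i. new_max i \<le> c}"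
  have fin: "finite ?P" using nth_subset_S finite_subset_S i length_cs by simp
  have max_gt: "new_max i < Max ?P" using False fin by (simp add: order.not_eq_order_implies_strict)
  have "cs ! Suc i = insert (new_min i) ?P" using step_diff(3)[OF i] by auto
  hence "Max (cs ! Suc i) = Max ?P" using fin max_gt step_diff(2)[OF i] by (simp add: Max_insert)
  hence "Max ?P \<in> ?T" using Max_step_component(2)[OF i] max_gt by simp
  moreover have "?T \<subseteq> ?P" using step_component(2)[OF i] step_diff(2,3)[OF i] by auto
  moreover have "?T \<in> B" using upper_tail_mem[OF step_component(1,3)[OF i]] .
  ultimately show ?thesis using step_component(3)[OF i] by blast
qed

lemma B_perm_word: "B_perm S B word"
  unfolding B_perm_def same_component_restr_iff
proof (intro conjI allI impI)
  show "distinct word" using set_word length_word card_S by (intro card_distinct) simp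
  show "set word = S" by (rule set_word)
  fix j assume j: "j < length word"
  define i where "i = j div 2"
  have i: "i < k" using j length_word i_def by simp
  show "\<exists>D\<in>B. D \<subseteq> set (take (Suc j) word) \<and> word ! j \<in> D \<and> Max (set (take (Suc j) word)) \<in> D"
  proof (cases "even j")
    case True
    hence "set (take (Suc j) word) = insert (new_max i) (cs ! i)" "word ! j = new_max i"
      using i_def set_take_odd_word[OF i] nth_word j length_word letter_even by auto
    thus ?thesis using new_max_connected_to_Max[OF i] by simp
  next
    case False
    hence "j = Suc (2 * i)" using i_def by presburger
    hence "set (take (Suc j) word) = cs ! Suc i" "word ! j = new_min i"
      using nth_word j length_word letter_odd set_take_even_word[of "Suc i"] i by simp_all
    thus ?thesis using new_min_connected_to_Max[OF i] by simp
  qed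
qed

lemma perm_to_chain_word: "perm_to_chain word = cs"
proof (rule nth_equalityI)
  show "length (perm_to_chain word) = length cs"
    using length_perm_to_chain length_word length_cs by simp
  fix i assume "i < length (perm_to_chain word)"
  thus "perm_to_chain word ! i = cs ! i"
    using length_perm_to_chain nth_perm_to_chain length_word set_take_even_word by simp
qed

end

theorem lemma4p3:
  fixes S :: "nat set" and B :: "nat set set" and k :: nat
  assumes "finite S"
    and "building_set S B"
    and "chordal B"
    and "card S = 2 * k"
    and "\<forall>C\<in>components B. even (card C)"
  shows "bij_betw perm_to_chain
           {xs. B_perm S B xs \<and> alternating xs}
           {cs \<in> max_chains_list S B. \<not> has_decreasing_position B cs}"
proof -
  interpret chordal_building_set S B by unfold_locales (rule assms)+
  have even_S: "even (card S)" using assms(4) by simp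
  have perm: "alternating_B_perm S B xs" if "xs \<in> {xs. B_perm S B xs \<and> alternating xs}" for xs
    using that by unfold_locales auto
  have "perm_to_chain xs \<in> {cs \<in> max_chains_list S B. \<not> has_decreasing_position B cs}"
    if "alternating_B_perm S B xs" for xs
    using alternating_B_perm.perm_to_chain_max_chain[OF that even_S]
      alternating_B_perm.perm_to_chain_no_descent[OF that] by blast
  moreover have "cs \<in> perm_to_chain ` {xs. B_perm S B xs \<and> alternating xs}"
    if "cs \<in> {cs \<in> max_chains_list S B. \<not> has_decreasing_position B cs}" for cs
  proof -
    interpret descent_free_chain S B k cs by unfold_locales (use assms that in auto)
    show ?thesis using B_perm_word alternating_word perm_to_chain_word by force
  qed
  ultimately show ?thesis
    unfolding bij_betw_def inj_on_def using perm perm_to_chain_inj[OF _ _ even_S] by blast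
qed

end
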